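(* Let $k,r,h$ be positive integers such that $\ell=\frac{k+h}{r}$ is an integer, and let $a,b$ be positive integers with $\mathbb{F}_{2^a}\subseteq\mathbb{F}_{2^b}$. Suppose there is a set $S_1=\{\xi_1,\ldots,\xi_{r+1}\}\subseteq\mathbb{F}_{2^a}$ of size $r+1$ which is $h$-wise weakly independent over $\mathbb{F}_2$ if $h$ is even, and $(h+1)$-wise weakly independent over $\mathbb{F}_2$ if $h$ is odd. Suppose further there is a set $S_2=\{\lambda_1,\ldots,\lambda_\ell\}\subseteq\mathbb{F}_{2^b}$ of size $\ell$ that is $h$-wise independent over $\mathbb{F}_{2^a}$. Set $\alpha_{i,s}=\lambda_i\xi_s$ for $i\in[\ell]$, $s\in[r+1]$. Then the code $\mathcal{C}\subseteq\mathbb{F}_{2^b}^{\ell(r+1)}$ consisting of all $(x_{i,s})_{i\in[\ell],s\in[r+1]}$ satisfying $\sum_{i=1}^{\ell}\sum_{s=1}^{r+1}\alpha_{i,s}^{2^{j-1}}x_{i,s}=0$ for $j=1,\ldots,h$ and $\sum_{s=1}^{r+1}x_{i,s}=0$ for $i=1,\ldots,\ell$ is a maximally recoverable local $(k,r,h)$-code over $\mathbb{F}_{2^b}$, whose local groups are the sets $\{(i,s):s\in[r+1]\}$, $i\in[\ell]$.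
   Context: A set $S\subseteq\mathbb{F}$ is $t$-wise weakly independent over $\mathbb{F}_2$ if no subset $T\subseteq S$ with $2\le|T|\le t$ has sum of its elements equal to $0$ (such a set may contain $0$). A set $S\subseteq\mathbb{F}$ is $t$-wise independent over a subfield $\mathbb{F}'$ if every subset of size at most $t$ is linearly independent over $\mathbb{F}'$. For positive integers $k,r,h$ with $r\mid(k+h)$, a local $(k,r,h)$-code over a finite field $\mathbb{F}$ is a linear systematic code of dimension $k$ and length $k+h+\frac{k+h}{r}$ consisting of $k$ data symbols, $h$ heavy parity symbols (each a linear combination of all data symbols), and, after partitioning the $k+h$ data and heavy symbols into groups of size $r$, one local parity per group equal to the sum of the group's symbols; a local group is such a group plus its local parity. The code is maximally recoverable if for every set $E$ of coordinates containing exactly one coordinate from each local group, puncturing the code in $E$ yields a maximum distance separable $[k+h,k]$ code (minimum distance $h+1$). *)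

theory Defs
  imports Main
begin

definition is_subfield :: "'f::field set \<Rightarrow> bool" where
  "is_subfield K \<longleftrightarrow> 0 \<in> K \<and> 1 \<in> K \<and>
     (\<forall>x\<in>K. \<forall>y\<in>K. x + y \<in> K \<and> x * y \<in> K) \<and>
     (\<forall>x\<in>K. - x \<in> K) \<and> (\<forall>x\<in>K. x \<noteq> 0 \<longrightarrow> inverse x \<in> K)"

definition weakly_indep :: "'f::field set \<Rightarrow> nat \<Rightarrow> bool" where
  "weakly_indep S t \<longleftrightarrow>
     (\<forall>T. T \<subseteq> S \<and> 2 \<le> card T \<and> card T \<le> t \<longrightarrow> (\<Sum>x\<in>T. x) \<noteq> 0)"

definition lin_indep_over :: "'f::field set \<Rightarrow> 'f set \<Rightarrow> bool" where
  "lin_indep_over K T \<longleftrightarrow>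
     (\<forall>c. (\<forall>x\<in>T. c x \<in> K) \<and> (\<Sum>x\<in>T. c x * x) = 0 \<longrightarrow> (\<forall>x\<in>T. c x = 0))"

definition t_wise_indep_over :: "'f::field set \<Rightarrow> 'f set \<Rightarrow> nat \<Rightarrow> bool" where
  "t_wise_indep_over K S t \<longleftrightarrow>
     (\<forall>T. T \<subseteq> S \<and> card T \<le> t \<longrightarrow> lin_indep_over K T)"

definition lin_code :: "('i \<Rightarrow> 'f::field) set \<Rightarrow> 'i set \<Rightarrow> bool" where
  "lin_code C A \<longleftrightarrow> finite A \<and> (\<forall>c\<in>C. \<forall>j. j \<notin> A \<longrightarrow> c j = 0) \<and> (\<lambda>_. 0) \<in> C \<and>
     (\<forall>c\<in>C. \<forall>d\<in>C. (\<lambda>j. c j + d j) \<in> C) \<and> (\<forall>a. \<forall>c\<in>C. (\<lambda>j. a * c j) \<in> C)"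

definition systematic :: "('i \<Rightarrow> 'f::field) set \<Rightarrow> 'i set \<Rightarrow> bool" where
  "systematic C D \<longleftrightarrow> (\<forall>v. \<exists>!c. c \<in> C \<and> (\<forall>j\<in>D. c j = v j))"

definition weight :: "'i set \<Rightarrow> ('i \<Rightarrow> 'f::zero) \<Rightarrow> nat" where
  "weight A c = card {j\<in>A. c j \<noteq> 0}"

definition min_dist_is :: "('i \<Rightarrow> 'f::zero) set \<Rightarrow> 'i set \<Rightarrow> nat \<Rightarrow> bool" where
  "min_dist_is C A d \<longleftrightarrow>
     (\<forall>c\<in>C. c \<noteq> (\<lambda>_. 0) \<longrightarrow> d \<le> weight A c) \<and>
     (\<exists>c\<in>C. c \<noteq> (\<lambda>_. 0) \<and> weight A c = d)"

definition mds_code :: "('i \<Rightarrow> 'f::field) set \<Rightarrow> 'i set \<Rightarrow> nat \<Rightarrow> nat \<Rightarrow> bool" where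
  "mds_code C A n kk \<longleftrightarrow> lin_code C A \<and> card A = n \<and>
     (\<exists>D. D \<subseteq> A \<and> card D = kk \<and> systematic C D) \<and> min_dist_is C A (n - kk + 1)"

definition local_code :: "('i \<Rightarrow> 'f::field) set \<Rightarrow> 'i set \<Rightarrow> (nat \<Rightarrow> 'i set) \<Rightarrow> nat \<Rightarrow> nat \<Rightarrow> nat \<Rightarrow> nat \<Rightarrow> bool" where
  "local_code C A G l k r h \<longleftrightarrow>
     lin_code C A \<and> A = (\<Union>i<l. G i) \<and> card A = k + h + l \<and>
     (\<forall>i<l. \<forall>i'<l. i \<noteq> i' \<longrightarrow> G i \<inter> G i' = {}) \<and>
     (\<forall>i<l. card (G i) = r + 1) \<and>
     (\<exists>p D. (\<forall>i<l. p i \<in> G i) \<and> D \<subseteq> A - p ` {..<l} \<and> card D = k \<and> systematic C D \<and>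
        (\<forall>c\<in>C. \<forall>i<l. c (p i) = (\<Sum>j\<in>G i - {p i}. c j)))"

definition puncture :: "('i \<Rightarrow> 'f::zero) set \<Rightarrow> 'i set \<Rightarrow> ('i \<Rightarrow> 'f) set" where
  "puncture C E = (\<lambda>c j. if j \<in> E then 0 else c j) ` C"

definition max_recoverable :: "('i \<Rightarrow> 'f::field) set \<Rightarrow> 'i set \<Rightarrow> (nat \<Rightarrow> 'i set) \<Rightarrow> nat \<Rightarrow> nat \<Rightarrow> nat \<Rightarrow> nat \<Rightarrow> bool" where
  "max_recoverable C A G l k r h \<longleftrightarrow> local_code C A G l k r h \<and>
     (\<forall>E. E \<subseteq> A \<and> (\<forall>i<l. card (E \<inter> G i) = 1) \<longrightarrow>
        mds_code (puncture C E) (A - E) (k + h) k)"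

end

theory Submission
  imports Defs "HOL-Number_Theory.Residues" "HOL-Computational_Algebra.Polynomial"
begin

text \<open>
  Puncture one coordinate \<open>(i, e i)\<close> from every local group and eliminate it with the local
  parity. As squaring is additive in characteristic 2, the heavy parities become the checks
  \<open>\<Sum>\<^sub>m \<beta>\<^sub>m ^ 2 ^ (j - 1) * x\<^sub>m = 0\<close>, \<open>j = 1..h\<close>, on the remaining \<open>k + h\<close> coordinates,
  where \<open>\<beta> (i, s) = \<lambda>\<^sub>i * (\<xi>\<^sub>s + \<xi>\<^bsub>e i\<^esub>)\<close>. Any at most \<open>h\<close> of these \<open>\<beta>\<close> are linearly independent
  over \<open>\<bbbF>\<^sub>2\<close>: grouping a vanishing subset sum by local groups gives \<open>\<Sum>\<^sub>i \<kappa>\<^sub>i * \<lambda>\<^sub>i = 0\<close> with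
  \<open>\<kappa>\<^sub>i \<in> \<bbbF>\<^bsub>2 ^ a\<^esub>\<close>, so every \<open>\<kappa>\<^sub>i\<close> vanishes, whereas for a group meeting the subset \<open>\<kappa>\<^sub>i\<close> is a sum of
  at least two and at most \<open>h\<close> (\<open>h + 1\<close> for odd \<open>h\<close>) distinct \<open>\<xi>\<^sub>s\<close>. For such \<open>\<beta>\<close> the square Moore matrix
  \<open>(\<beta>\<^sub>m ^ 2 ^ (j - 1))\<close> is invertible, so any \<open>h\<close> columns of the punctured parity checks are
  independent, which makes the punctured code MDS.
\<close>

section \<open>Characteristic two and Moore matrices\<close>

lemma CHAR_eq_2_if_card_eq_power_2:
  assumes "card (UNIV :: 'f::{field,finite} set) = 2 ^ b"
  shows "CHAR('f) = 2"
proof -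
  have "prime CHAR('f)"
    by (intro prime_CHAR_semidom finite_imp_CHAR_pos) simp
  moreover have "CHAR('f) dvd 2 ^ b"
    using CHAR_dvd_CARD[where 'a = 'f] assms by simp
  ultimately show ?thesis
    by (metis prime_dvd_power primes_dvd_imp_eq two_is_prime_nat)
qed

lemma of_nat_CHAR_2:
  assumes "CHAR('a::semiring_1) = 2"
  shows "of_nat n = (if even n then 0 else (1::'a))"
proof -
  have "of_nat (2 * (n div 2)) = (0::'a)"
    by (subst of_nat_eq_0_iff_char_dvd) (simp add: assms)
  moreover have "n = 2 * (n div 2) + n mod 2" by simp
  ultimately show ?thesis
    by (metis add.left_neutral even_iff_mod_2_eq_zero odd_iff_mod_2_eq_one of_nat_1 of_nat_0 of_nat_add)
qed

lemma add_eq_0_iff_eq_CHAR_2: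
  assumes "CHAR('a::ring_1) = 2"
  shows "x + y = (0::'a) \<longleftrightarrow> x = y"
  by (metis add_eq_0_iff uminus_CHAR_2[OF assms])

lemma square_system_solvable:
  fixes M :: "'j \<Rightarrow> 'i \<Rightarrow> 'f::{field,finite}"
  assumes "finite I" "finite J" "card I = card J"
    and kernel: "\<And>y. \<forall>j\<in>J. (\<Sum>m\<in>I. M j m * y m) = 0 \<Longrightarrow> \<forall>m\<in>I. y m = 0"
  shows "\<exists>y. \<forall>j\<in>J. (\<Sum>m\<in>I. M j m * y m) = w j"
proof -
  define F where "F y = restrict (\<lambda>j. \<Sum>m\<in>I. M j m * y m) J" for y
  have inj: "inj_on F (I \<rightarrow>\<^sub>E UNIV)"
  proof (rule inj_onI)
    fix y y' assume y: "y \<in> I \<rightarrow>\<^sub>E UNIV" and y': "y' \<in> I \<rightarrow>\<^sub>E UNIV" and "F y = F y'"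
    have "(\<Sum>m\<in>I. M j m * (y m - y' m)) = 0" if "j \<in> J" for j
    proof -
      have "F y j = F y' j"
        using \<open>F y = F y'\<close> by simp
      then show ?thesis
        using that by (simp add: F_def right_diff_distrib sum_subtractf)
    qed
    then show "y = y'"
      using kernel[of "\<lambda>m. y m - y' m"] y y' by (intro PiE_ext) auto
  qed
  have "F ` (I \<rightarrow>\<^sub>E UNIV) = J \<rightarrow>\<^sub>E UNIV"
  proof (rule card_subset_eq)
    show "finite (J \<rightarrow>\<^sub>E (UNIV :: 'f set))"
      using \<open>finite J\<close> by (simp add: finite_PiE)
    show "F ` (I \<rightarrow>\<^sub>E UNIV) \<subseteq> J \<rightarrow>\<^sub>E UNIV"
      by (auto simp: F_def)
    show "card (F ` (I \<rightarrow>\<^sub>E UNIV)) = card (J \<rightarrow>\<^sub>E (UNIV :: 'f set))"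
      using assms(1-3) by (simp add: card_image[OF inj] card_PiE)
  qed
  then have "restrict w J \<in> F ` (I \<rightarrow>\<^sub>E UNIV)"
    by simp
  then obtain y where y: "restrict w J = F y"
    by blast
  show ?thesis
  proof (intro exI ballI)
    fix j assume "j \<in> J"
    then have "F y j = w j"
      using y by (metis restrict_apply')
    then show "(\<Sum>m\<in>I. M j m * y m) = w j"
      using \<open>j \<in> J\<close> by (simp add: F_def)
  qed
qed

lemma freshmans_dream_CHAR_2:
  assumes "CHAR('a::comm_semiring_1) = 2"
  shows "(x + y :: 'a) ^ 2 ^ n = x ^ 2 ^ n + y ^ 2 ^ n"
  using assms by (intro freshmans_dream') simp_all

definition binary_indep :: "('i \<Rightarrow> 'f::field) \<Rightarrow> 'i set \<Rightarrow> bool" where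
  "binary_indep \<beta> S \<longleftrightarrow> (\<forall>T\<subseteq>S. T \<noteq> {} \<longrightarrow> sum \<beta> T \<noteq> 0)"

lemma inj_on_sum_Pow:
  fixes \<beta> :: "'i \<Rightarrow> 'f::field"
  assumes "CHAR('f) = 2" "finite S" "binary_indep \<beta> S"
  shows "inj_on (sum \<beta>) (Pow S)"
proof (rule inj_onI)
  fix T T' assume T: "T \<in> Pow S" and T': "T' \<in> Pow S" and eq: "sum \<beta> T = sum \<beta> T'"
  have fin: "finite T" "finite T'"
    using T T' \<open>finite S\<close> finite_subset by auto
  have "sum \<beta> (T - T') + sum \<beta> (T \<inter> T') = sum \<beta> (T' - T) + sum \<beta> (T \<inter> T')"
    using eq fin by (metis Int_commute sum.Int_Diff add.commute)
  then have "sum \<beta> (T - T') = sum \<beta> (T' - T)"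
    by simp
  then have "sum \<beta> (T - T') + sum \<beta> (T' - T) = 0"
    by (simp only: add_eq_0_iff_eq_CHAR_2[OF \<open>CHAR('f) = 2\<close>])
  then have "sum \<beta> ((T - T') \<union> (T' - T)) = 0"
    using fin by (subst sum.union_disjoint) auto
  moreover have "(T - T') \<union> (T' - T) \<subseteq> S"
    using T T' by auto
  ultimately have "(T - T') \<union> (T' - T) = {}"
    using \<open>binary_indep \<beta> S\<close> unfolding binary_indep_def by blast
  then show "T = T'" by blast
qed

text \<open>The linearized polynomial \<open>\<Sum>\<^sub>j d\<^sub>j * X ^ 2 ^ (j - 1)\<close> is additive, so it vanishes on all
  \<open>2 ^ card S\<close> distinct subset sums of \<open>\<beta>\<close> although its degree is below \<open>2 ^ card S\<close>.\<close>

lemma moore_left_kernel_trivial: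
  fixes \<beta> :: "'i \<Rightarrow> 'f::field"
  assumes char: "CHAR('f) = 2" and "finite S" "binary_indep \<beta> S"
    and vanish: "\<forall>m\<in>S. (\<Sum>j\<in>{1..card S}. d j * \<beta> m ^ 2 ^ (j - 1)) = 0"
  shows "\<forall>j\<in>{1..card S}. d j = 0"
proof -
  define n where "n = card S"
  define L where "L = (\<Sum>j\<in>{1..n}. monom (d j) (2 ^ (j - 1)))"
  have poly_L: "poly L x = (\<Sum>j\<in>{1..n}. d j * x ^ 2 ^ (j - 1))" for x
    unfolding L_def poly_sum poly_monom ..
  have poly_L_add: "poly L (x + y) = poly L x + poly L y" for x y
    unfolding poly_L by (simp add: freshmans_dream_CHAR_2[OF char] distrib_left sum.distrib)
  have "poly L (sum \<beta> T) = 0" if "T \<subseteq> S" for T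
    using finite_subset[OF that \<open>finite S\<close>] that
  proof (induction T rule: finite_induct)
    case empty
    then show ?case by (simp add: poly_L power_0_left)
  next
    case (insert m T)
    then show ?case using poly_L_add vanish by (simp add: poly_L n_def)
  qed
  then have sums_roots: "sum \<beta> ` Pow S \<subseteq> {x. poly L x = 0}"
    by auto
  have "L = 0"
  proof (rule ccontr)
    assume "L \<noteq> 0"
    then have "n \<noteq> 0"
      by (cases n) (auto simp: L_def)
    have "degree L \<le> 2 ^ (n - 1)" unfolding L_def
      by (rule degree_sum_le) (auto intro: order.trans[OF degree_monom_le])
    also have "\<dots> < 2 ^ n"
      using \<open>n \<noteq> 0\<close> by simp
    also have "2 ^ n = card (sum \<beta> ` Pow S)"
      using card_image[OF inj_on_sum_Pow[OF assms(1-3)]] card_Pow[OF \<open>finite S\<close>] n_def by simp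
    also have "\<dots> \<le> card {x. poly L x = 0}"
      using sums_roots poly_roots_finite[OF \<open>L \<noteq> 0\<close>] by (rule card_mono[rotated])
    also have "\<dots> \<le> degree L"
      by (rule card_poly_roots_bound[OF \<open>L \<noteq> 0\<close>])
    finally show False by simp
  qed
  show ?thesis
  proof
    fix j assume j: "j \<in> {1..card S}"
    have "coeff L (2 ^ (j - 1)) = (\<Sum>i\<in>{1..n}. if i = j then d i else 0)"
      unfolding L_def coeff_sum coeff_monom
      by (rule sum.cong) (use j n_def in auto)
    then show "d j = 0"
      using j \<open>L = 0\<close> n_def by simp
  qed
qed

lemma moore_kernel_trivial:
  fixes \<beta> y :: "'i \<Rightarrow> 'f::{field,finite}"
  assumes "CHAR('f) = 2" "finite S" "binary_indep \<beta> S" "card S \<le> t"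
    and eqs: "\<forall>j\<in>{1..t}. (\<Sum>m\<in>S. \<beta> m ^ 2 ^ (j - 1) * y m) = 0"
  shows "\<forall>m\<in>S. y m = 0"
proof
  fix m0 assume "m0 \<in> S"
  define n where "n = card S"
  \<comment> \<open>a row combination of the Moore matrix equal to the indicator of \<open>m0\<close> isolates \<open>y m0\<close>\<close>
  have "\<exists>c. \<forall>m\<in>S. (\<Sum>j\<in>{1..n}. \<beta> m ^ 2 ^ (j - 1) * c j) = (if m = m0 then 1 else 0)"
    using moore_left_kernel_trivial[OF assms(1-3)] \<open>finite S\<close>
    by (intro square_system_solvable) (auto simp: n_def mult.commute)
  then obtain c where c: "\<forall>m\<in>S. (\<Sum>j\<in>{1..n}. \<beta> m ^ 2 ^ (j - 1) * c j) = (if m = m0 then 1 else 0)"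
    by blast
  have "y m0 = (\<Sum>m\<in>S. if m = m0 then y m else 0)"
    using \<open>m0 \<in> S\<close> \<open>finite S\<close> by simp
  also have "\<dots> = (\<Sum>m\<in>S. (if m = m0 then 1 else 0) * y m)"
    by (intro sum.cong) auto
  also have "\<dots> = (\<Sum>m\<in>S. (\<Sum>j\<in>{1..n}. \<beta> m ^ 2 ^ (j - 1) * c j) * y m)"
    using c by (intro sum.cong) auto
  also have "\<dots> = (\<Sum>j\<in>{1..n}. c j * (\<Sum>m\<in>S. \<beta> m ^ 2 ^ (j - 1) * y m))"
    unfolding sum_distrib_right sum_distrib_left by (subst sum.swap) (simp add: mult_ac)
  also have "\<dots> = 0"
    using eqs \<open>card S \<le> t\<close> n_def by (intro sum.neutral) auto
  finally show "y m0 = 0" .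
qed

lemma moore_system_solvable:
  fixes \<beta> :: "'i \<Rightarrow> 'f::{field,finite}"
  assumes "CHAR('f) = 2" "finite S" "binary_indep \<beta> S"
  shows "\<exists>y. \<forall>j\<in>{1..card S}. (\<Sum>m\<in>S. \<beta> m ^ 2 ^ (j - 1) * y m) = w j"
  using moore_kernel_trivial[OF assms] assms(2) by (intro square_system_solvable) auto

section \<open>Linear codes\<close>

lemma lin_code_diff:
  assumes "lin_code C A" "c \<in> C" "d \<in> C"
  shows "(\<lambda>j. c j - d j) \<in> C"
proof -
  have "(\<lambda>j. (-1) * d j) \<in> C"
    using assms unfolding lin_code_def by blast
  then have "(\<lambda>j. c j + (-1) * d j) \<in> C"
    using assms(1,2) unfolding lin_code_def by fast
  then show ?thesis by simp
qed

lemma lin_code_puncture: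
  fixes C :: "('i \<Rightarrow> 'f::field) set"
  assumes lin: "lin_code C A"
  shows "lin_code (puncture C E) (A - E)"
proof -
  define pc where "pc c = (\<lambda>j. if j \<in> E then 0 else c j)" for c :: "'i \<Rightarrow> 'f"
  have mem: "p \<in> puncture C E \<longleftrightarrow> (\<exists>c\<in>C. p = pc c)" for p
    unfolding puncture_def pc_def by blast
  show ?thesis
    unfolding lin_code_def
  proof (intro conjI ballI allI impI)
    show "finite (A - E)"
      using lin by (simp add: lin_code_def)
  next
    fix p j assume "p \<in> puncture C E" "j \<notin> A - E"
    then show "p j = 0"
      using lin unfolding mem lin_code_def pc_def by auto
  next
    have "pc (\<lambda>_. 0) = (\<lambda>_. 0)"
      by (simp add: pc_def)
    then show "(\<lambda>_. 0) \<in> puncture C E"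
      using lin unfolding mem lin_code_def by metis
  next
    fix p q assume "p \<in> puncture C E" "q \<in> puncture C E"
    then obtain c d where "c \<in> C" "d \<in> C" "p = pc c" "q = pc d"
      unfolding mem by blast
    moreover have "(\<lambda>j. pc c j + pc d j) = pc (\<lambda>j. c j + d j)"
      by (auto simp: pc_def)
    ultimately show "(\<lambda>j. p j + q j) \<in> puncture C E"
      using lin unfolding mem lin_code_def by auto
  next
    fix a p assume "p \<in> puncture C E"
    then obtain c where "c \<in> C" "p = pc c"
      unfolding mem by blast
    moreover have "(\<lambda>j. a * pc c j) = pc (\<lambda>j. a * c j)"
      by (auto simp: pc_def)
    ultimately show "(\<lambda>j. a * p j) \<in> puncture C E"
      using lin unfolding mem lin_code_def by auto
  qed
qed

lemma systematic_if_puncture_systematic: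
  fixes C :: "('i \<Rightarrow> 'f::field) set"
  assumes "systematic (puncture C E) D" "D \<inter> E = {}"
    and inj: "inj_on (\<lambda>c j. if j \<in> E then 0 else c j) C"
  shows "systematic C D"
  unfolding systematic_def
proof
  fix v
  define pc where "pc c = (\<lambda>j. if j \<in> E then 0 else c j)" for c :: "'i \<Rightarrow> 'f"
  have agree: "(\<forall>j\<in>D. pc c j = v j) \<longleftrightarrow> (\<forall>j\<in>D. c j = v j)" for c
    using \<open>D \<inter> E = {}\<close> by (auto simp: pc_def)
  obtain p where "p \<in> puncture C E" "\<forall>j\<in>D. p j = v j"
    and uniq: "\<And>p'. p' \<in> puncture C E \<Longrightarrow> \<forall>j\<in>D. p' j = v j \<Longrightarrow> p' = p"
    using assms(1) unfolding systematic_def by metis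
  then obtain c where c: "c \<in> C" "p = pc c"
    unfolding puncture_def pc_def by blast
  show "\<exists>!c. c \<in> C \<and> (\<forall>j\<in>D. c j = v j)"
  proof (rule ex1I[of _ c])
    show "c \<in> C \<and> (\<forall>j\<in>D. c j = v j)"
      using c \<open>\<forall>j\<in>D. p j = v j\<close> agree by blast
  next
    fix c' assume "c' \<in> C \<and> (\<forall>j\<in>D. c' j = v j)"
    then have "pc c' = pc c"
      using uniq agree c unfolding puncture_def pc_def by blast
    then show "c' = c"
      using inj \<open>c' \<in> C \<and> _\<close> c(1) unfolding pc_def by (auto dest: inj_onD)
  qed
qed

lemma mds_codeI:
  fixes P :: "('i \<Rightarrow> 'f::field) set"
  assumes lin: "lin_code P B" and "card B = k + h" "0 < k" "D \<subseteq> B" "card D = k"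
    and weight: "\<And>p. p \<in> P \<Longrightarrow> p \<noteq> (\<lambda>_. 0) \<Longrightarrow> h < weight B p"
    and extend: "\<And>v. \<exists>p\<in>P. \<forall>j\<in>D. p j = v j"
  shows "mds_code P B (k + h) k"
proof -
  have "finite B"
    using lin unfolding lin_code_def by blast
  have card_rest: "card (B - D) = h"
    using \<open>finite B\<close> assms(2,4,5) by (simp add: card_Diff_subset finite_subset)
  have small_support: "weight B p \<le> card F" if "{j\<in>B. p j \<noteq> 0} \<subseteq> F" "finite F" for p :: "'i \<Rightarrow> 'f" and F
    using that unfolding weight_def by (rule card_mono[rotated])
  have "systematic P D"
    unfolding systematic_def
  proof
    fix v
    show "\<exists>!p. p \<in> P \<and> (\<forall>j\<in>D. p j = v j)"
    proof (rule ex_ex1I)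
      show "\<exists>p. p \<in> P \<and> (\<forall>j\<in>D. p j = v j)"
        using extend by blast
    next
      fix p p' assume p: "p \<in> P \<and> (\<forall>j\<in>D. p j = v j)" and p': "p' \<in> P \<and> (\<forall>j\<in>D. p' j = v j)"
      define d where "d j = p j - p' j" for j
      have "d \<in> P"
        using lin_code_diff[OF lin] p p' unfolding d_def by blast
      moreover have "{j\<in>B. d j \<noteq> 0} \<subseteq> B - D"
        using p p' by (auto simp: d_def)
      then have "weight B d \<le> h"
        using small_support card_rest \<open>finite B\<close> by fastforce
      ultimately have "d = (\<lambda>_. 0)"
        using weight by fastforce
      then show "p = p'"
        by (auto simp: d_def fun_eq_iff)
    qed
  qed
  moreover have "min_dist_is P B (k + h - k + 1)"
    unfolding min_dist_is_def
  proof (intro conjI ballI impI)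
    fix p assume "p \<in> P" "p \<noteq> (\<lambda>_. 0)"
    then show "k + h - k + 1 \<le> weight B p"
      using weight by fastforce
  next
    obtain d0 where "d0 \<in> D"
      using \<open>0 < k\<close> \<open>card D = k\<close> by fastforce
    obtain p where p: "p \<in> P" "\<forall>j\<in>D. p j = (if j = d0 then 1 else 0)"
      using extend[of "\<lambda>j. if j = d0 then 1 else 0"] by blast
    then have "p \<noteq> (\<lambda>_. 0)"
      using \<open>d0 \<in> D\<close> by force
    moreover have "weight B p \<le> card (insert d0 (B - D))"
      using p \<open>finite B\<close> by (intro small_support) auto
    then have "weight B p \<le> h + 1"
      using card_rest \<open>finite B\<close> by (simp add: card_insert_if split: if_splits)
    ultimately show "\<exists>p\<in>P. p \<noteq> (\<lambda>_. 0) \<and> weight B p = k + h - k + 1"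
      using weight \<open>p \<in> P\<close> by fastforce
  qed
  ultimately show ?thesis
    unfolding mds_code_def using assms(1,2,4,5) by blast
qed

section \<open>The construction\<close>

lemma sum_mem_subfield:
  assumes "is_subfield K" "\<forall>x\<in>U. f x \<in> K"
  shows "sum f U \<in> K"
proof (cases "finite U")
  case True
  then show ?thesis using assms(2)
    by (induction U rule: finite_induct) (use assms(1) in \<open>auto simp: is_subfield_def\<close>)
qed (use assms(1) in \<open>simp add: is_subfield_def\<close>)

locale frobenius_lrc =
  fixes k r h l :: nat and K :: "'f::{field,finite} set" and xi lam :: "nat \<Rightarrow> 'f"
  assumes char_2: "CHAR('f) = 2"
    and k_pos: "0 < k" and lr_eq: "l * r = k + h"
    and subfield: "is_subfield K" and xi_in_K: "\<forall>s<r+1. xi s \<in> K"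
    and inj_xi: "inj_on xi {..<r+1}"
    and weakly_indep_xi: "weakly_indep (xi ` {..<r+1}) (if even h then h else h + 1)"
    and inj_lam: "inj_on lam {..<l}"
    and indep_lam: "t_wise_indep_over K (lam ` {..<l}) h"
begin

definition coords :: "(nat \<times> nat) set" where
  "coords = {..<l} \<times> {..<r+1}"

definition code :: "(nat \<times> nat \<Rightarrow> 'f) set" where
  "code = {x. (\<forall>p. p \<notin> {..<l} \<times> {..<r+1} \<longrightarrow> x p = 0) \<and>
     (\<forall>j\<in>{1..h}. (\<Sum>(i,s)\<in>{..<l} \<times> {..<r+1}. (lam i * xi s) ^ (2 ^ (j - 1)) * x (i, s)) = 0) \<and>
     (\<forall>i<l. (\<Sum>s<r+1. x (i, s)) = 0)}"

definition erased :: "(nat \<Rightarrow> nat) \<Rightarrow> (nat \<times> nat) set" where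
  "erased e = (\<lambda>i. (i, e i)) ` {..<l}"

definition beta :: "(nat \<Rightarrow> nat) \<Rightarrow> nat \<times> nat \<Rightarrow> 'f" where
  "beta e = (\<lambda>(i, s). lam i * (xi s + xi (e i)))"

definition fill :: "(nat \<Rightarrow> nat) \<Rightarrow> (nat \<times> nat \<Rightarrow> 'f) \<Rightarrow> nat \<times> nat \<Rightarrow> 'f" where
  "fill e y = (\<lambda>(i, s). if i < l \<and> s < r+1 then
     (if s = e i then \<Sum>s'\<in>{..<r+1} - {e i}. y (i, s') else y (i, s)) else 0)"

lemma finite_coords: "finite coords"
  by (simp add: coords_def)

lemma coords_minus_erased: "coords - erased e = Sigma {..<l} (\<lambda>i. {..<r+1} - {e i})"
  unfolding coords_def erased_def by auto

lemma card_coords_minus_erased: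
  assumes "\<forall>i<l. e i < r+1"
  shows "card (coords - erased e) = k + h"
proof -
  have "card (coords - erased e) = (\<Sum>i<l. card ({..<r+1} - {e i}))"
    unfolding coords_minus_erased by simp
  also have "\<dots> = l * r"
    using assms by simp
  finally show ?thesis
    using lr_eq by simp
qed

lemma sum_xi_ne_0:
  assumes "W \<subseteq> {..<r+1}" "2 \<le> card W" "card W \<le> (if even h then h else h + 1)"
  shows "sum xi W \<noteq> 0"
proof -
  have inj: "inj_on xi W"
    using inj_xi assms(1) by (rule inj_on_subset)
  have "(\<Sum>x\<in>xi ` W. x) \<noteq> 0"
    using weakly_indep_xi assms card_image[OF inj] unfolding weakly_indep_def
    by (metis image_mono)
  then show ?thesis
    by (simp add: sum.reindex[OF inj])
qed

text \<open>An even number of summands leaves \<open>\<Sum>\<^sub>U \<xi>\<^sub>s\<close>, an odd number \<open>\<Sum>\<^bsub>U \<union> {e\<^sub>0}\<^esub> \<xi>\<^sub>s\<close>;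
  the latter has \<open>h + 1\<close> terms only if \<open>h\<close> is odd, which is why weak independence is needed
  up to \<open>h + 1\<close> in that case.\<close>

lemma sum_xi_shifted_ne_0:
  assumes "e0 < r+1" "U \<subseteq> {..<r+1} - {e0}" "U \<noteq> {}" "card U \<le> h"
  shows "(\<Sum>s\<in>U. xi s + xi e0) \<noteq> 0"
proof -
  have "finite U" "card U \<ge> 1"
    using assms(2,3) finite_subset by (auto simp: Suc_le_eq card_gt_0_iff intro: finite_subset)
  have sum_eq: "(\<Sum>s\<in>U. xi s + xi e0) = sum xi U + of_nat (card U) * xi e0"
    by (simp add: sum.distrib)
  show ?thesis
  proof (cases "even (card U)")
    case True
    then have "2 \<le> card U"
      using \<open>card U \<ge> 1\<close> by presburger
    moreover have "U \<subseteq> {..<r+1}"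
      using assms(2) by blast
    ultimately show ?thesis
      using True sum_eq sum_xi_ne_0[of U] assms(2,4) of_nat_CHAR_2[OF char_2, of "card U"] by auto
  next
    case False
    have "e0 \<notin> U"
      using assms(2) by auto
    then have "card (insert e0 U) = card U + 1" "sum xi (insert e0 U) = (\<Sum>s\<in>U. xi s + xi e0)"
      using False sum_eq \<open>finite U\<close> of_nat_CHAR_2[OF char_2, of "card U"] by (simp_all add: add.commute)
    moreover have "card U + 1 \<le> (if even h then h else h + 1)"
      using False assms(4) by (cases "even h") (auto simp: le_less)
    ultimately show ?thesis
      using sum_xi_ne_0[of "insert e0 U"] assms(1,2) \<open>card U \<ge> 1\<close> by auto
  qed
qed

lemma lam_combination_eq_0:
  assumes "I \<subseteq> {..<l}" "card I \<le> h" "\<forall>i\<in>I. \<kappa> i \<in> K" "(\<Sum>i\<in>I. \<kappa> i * lam i) = 0"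
  shows "\<forall>i\<in>I. \<kappa> i = 0"
proof -
  have inj: "inj_on lam I"
    using inj_lam assms(1) by (rule inj_on_subset)
  have "finite I"
    using assms(1) finite_subset by blast
  then have "lin_indep_over K (lam ` I)"
    using indep_lam assms(1,2) card_image_le[of I lam] unfolding t_wise_indep_over_def
    by (meson image_mono order.trans)
  moreover have "(\<Sum>x\<in>lam ` I. \<kappa> (the_inv_into I lam x) * x) = 0"
    using assms(4) by (simp add: sum.reindex[OF inj] the_inv_into_f_f[OF inj])
  ultimately show ?thesis
    using assms(3) unfolding lin_indep_over_def
    by (auto simp: the_inv_into_f_f[OF inj] dest!: spec[of _ "\<lambda>x. \<kappa> (the_inv_into I lam x)"])
qed

lemma sum_beta_ne_0:
  assumes e: "\<forall>i<l. e i < r+1" and T: "T \<subseteq> coords - erased e" "T \<noteq> {}" "card T \<le> h"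
  shows "sum (beta e) T \<noteq> 0"
proof
  assume sum_0: "sum (beta e) T = 0"
  define I where "I = fst ` T"
  define U where "U i = {s. (i, s) \<in> T}" for i
  have "finite T"
    using T(1) finite_coords finite_subset by blast
  have T_eq: "T = Sigma I U"
    unfolding I_def U_def by force
  have I_sub: "I \<subseteq> {..<l}" and U_sub: "\<And>i. i \<in> I \<Longrightarrow> U i \<subseteq> {..<r+1} - {e i}"
    using T(1) unfolding I_def U_def coords_minus_erased by auto
  have "finite I" "\<forall>i\<in>I. finite (U i)"
    using I_sub U_sub finite_subset by (blast, meson finite_Diff finite_lessThan finite_subset)
  then have "(\<Sum>i\<in>I. (\<Sum>s\<in>U i. xi s + xi (e i)) * lam i) = sum (beta e) T"
    unfolding T_eq by (simp add: sum.Sigma[symmetric] beta_def sum_distrib_left mult.commute)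
  moreover have "card I \<le> h"
    using card_image_le[OF \<open>finite T\<close>, of fst] T(3) unfolding I_def by linarith
  moreover have "xi s + xi (e i) \<in> K" if "i \<in> I" "s \<in> U i" for i s
  proof -
    have "s < r+1" "e i < r+1"
      using U_sub[OF that(1)] that I_sub e by auto
    then show ?thesis
      using xi_in_K subfield unfolding is_subfield_def by blast
  qed
  then have "\<forall>i\<in>I. (\<Sum>s\<in>U i. xi s + xi (e i)) \<in> K"
    using subfield by (blast intro: sum_mem_subfield)
  ultimately have zero: "\<forall>i\<in>I. (\<Sum>s\<in>U i. xi s + xi (e i)) = 0"
    using lam_combination_eq_0 I_sub sum_0 by simp
  obtain i s where "(i, s) \<in> T"
    using T(2) by auto
  then have "i \<in> I" "U i \<noteq> {}"
    unfolding I_def U_def by force+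
  have "card (U i) = card ({i} \<times> U i)"
    by (simp add: card_cartesian_product)
  also have "\<dots> \<le> card T"
    using \<open>finite T\<close> by (intro card_mono) (auto simp: U_def)
  finally show False
    using sum_xi_shifted_ne_0[OF _ U_sub[OF \<open>i \<in> I\<close>] \<open>U i \<noteq> {}\<close>] zero \<open>i \<in> I\<close> I_sub e T(3)
    by auto
qed

lemma binary_indep_beta:
  assumes "\<forall>i<l. e i < r+1" "S \<subseteq> coords - erased e" "card S \<le> h"
  shows "binary_indep (beta e) S"
  unfolding binary_indep_def
proof (intro allI impI)
  fix T assume T: "T \<subseteq> S" "T \<noteq> {}"
  have "finite S"
    using assms(2) finite_coords finite_subset by blast
  then have "card T \<le> h"
    using T card_mono assms(3) order_trans by blast
  then show "sum (beta e) T \<noteq> 0"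
    by (intro sum_beta_ne_0[OF assms(1)]) (use T assms(2) in auto)
qed

lemma local_parity:
  assumes "c \<in> code" "i < l" "s0 < r+1"
  shows "c (i, s0) = (\<Sum>s\<in>{..<r+1} - {s0}. c (i, s))"
proof -
  have "c (i, s0) + (\<Sum>s\<in>{..<r+1} - {s0}. c (i, s)) = (\<Sum>s<r+1. c (i, s))"
    by (rule sum.remove[symmetric]) (use assms(3) in auto)
  also have "\<dots> = 0"
    using assms(1,2) unfolding code_def by simp
  finally show ?thesis
    by (simp only: add_eq_0_iff_eq_CHAR_2[OF char_2])
qed

lemma heavy_sum_eliminate:
  assumes e: "\<forall>i<l. e i < r+1"
    and parity: "\<forall>i<l. x (i, e i) = (\<Sum>s\<in>{..<r+1} - {e i}. x (i, s))"
  shows "(\<Sum>(i,s)\<in>{..<l} \<times> {..<r+1}. (lam i * xi s) ^ 2 ^ n * x (i, s))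
       = (\<Sum>m\<in>coords - erased e. beta e m ^ 2 ^ n * x m)"
proof -
  have "(\<Sum>s<r+1. (lam i * xi s) ^ 2 ^ n * x (i, s))
      = (\<Sum>s\<in>{..<r+1} - {e i}. beta e (i, s) ^ 2 ^ n * x (i, s))" if "i < l" for i
  proof -
    have "(\<Sum>s<r+1. (lam i * xi s) ^ 2 ^ n * x (i, s))
        = (lam i * xi (e i)) ^ 2 ^ n * x (i, e i)
          + (\<Sum>s\<in>{..<r+1} - {e i}. (lam i * xi s) ^ 2 ^ n * x (i, s))"
      by (rule sum.remove) (use e that in auto)
    also have "\<dots> = (\<Sum>s\<in>{..<r+1} - {e i}. ((lam i * xi s) ^ 2 ^ n + (lam i * xi (e i)) ^ 2 ^ n) * x (i, s))"
      using parity that by (simp add: sum_distrib_left distrib_right sum.distrib)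
    also have "\<dots> = (\<Sum>s\<in>{..<r+1} - {e i}. beta e (i, s) ^ 2 ^ n * x (i, s))"
      by (simp add: beta_def distrib_left freshmans_dream_CHAR_2[OF char_2])
    finally show ?thesis .
  qed
  then show ?thesis
    unfolding coords_minus_erased sum.cartesian_product[symmetric]
    by (simp add: sum.Sigma split_def)
qed

lemma mem_code_iff:
  assumes e: "\<forall>i<l. e i < r+1"
  shows "x \<in> code \<longleftrightarrow> (\<forall>m. m \<notin> coords \<longrightarrow> x m = 0) \<and>
      (\<forall>i<l. x (i, e i) = (\<Sum>s\<in>{..<r+1} - {e i}. x (i, s))) \<and>
      (\<forall>j\<in>{1..h}. (\<Sum>m\<in>coords - erased e. beta e m ^ 2 ^ (j - 1) * x m) = 0)"
proof -
  have "(\<Sum>s<r+1. x (i, s)) = 0 \<longleftrightarrow> x (i, e i) = (\<Sum>s\<in>{..<r+1} - {e i}. x (i, s))"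
    if "i < l" for i
  proof -
    have "(\<Sum>s<r+1. x (i, s)) = x (i, e i) + (\<Sum>s\<in>{..<r+1} - {e i}. x (i, s))"
      by (rule sum.remove) (use e that in auto)
    then show ?thesis
      by (simp only: add_eq_0_iff_eq_CHAR_2[OF char_2])
  qed
  then show ?thesis
    using heavy_sum_eliminate[OF e] unfolding code_def coords_def by auto
qed

lemma lin_code_code: "lin_code code coords"
  unfolding lin_code_def
proof (intro conjI ballI allI impI)
  fix c d assume "c \<in> code" "d \<in> code"
  then show "(\<lambda>j. c j + d j) \<in> code"
    unfolding code_def by (simp add: split_def distrib_left sum.distrib del: sum.lessThan_Suc)
next
  fix a c assume "c \<in> code"
  then show "(\<lambda>j. a * c j) \<in> code"
    unfolding code_def by (simp add: split_def mult.left_commute[of _ a] sum_distrib_left[symmetric]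
        del: sum.lessThan_Suc)
qed (auto simp: code_def coords_def)

lemma fill_eq: "m \<in> coords - erased e \<Longrightarrow> fill e y m = y m"
  unfolding coords_def erased_def fill_def by auto

lemma fill_mem_code:
  assumes e: "\<forall>i<l. e i < r+1"
    and heavy: "\<forall>j\<in>{1..h}. (\<Sum>m\<in>coords - erased e. beta e m ^ 2 ^ (j - 1) * y m) = 0"
  shows "fill e y \<in> code"
  unfolding mem_code_iff[OF e]
proof (intro conjI allI impI ballI)
  fix j assume "j \<in> {1..h}"
  have "(\<Sum>m\<in>coords - erased e. beta e m ^ 2 ^ (j - 1) * fill e y m)
      = (\<Sum>m\<in>coords - erased e. beta e m ^ 2 ^ (j - 1) * y m)"
    by (rule sum.cong) (simp_all add: fill_eq)
  then show "(\<Sum>m\<in>coords - erased e. beta e m ^ 2 ^ (j - 1) * fill e y m) = 0"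
    using heavy \<open>j \<in> {1..h}\<close> by simp
qed (use e in \<open>auto simp: fill_def coords_def split: if_splits intro!: sum.cong\<close>)

lemma sparse_codeword_vanishes:
  assumes e: "\<forall>i<l. e i < r+1" and "c \<in> code"
    and sparse: "card {m \<in> coords - erased e. c m \<noteq> 0} \<le> h"
  shows "\<forall>m\<in>coords - erased e. c m = 0"
proof -
  define S where "S = {m \<in> coords - erased e. c m \<noteq> 0}"
  have "finite S"
    unfolding S_def using finite_coords by simp
  moreover have "binary_indep (beta e) S"
    using sparse unfolding S_def by (intro binary_indep_beta[OF e]) auto
  moreover have "card S \<le> h"
    using sparse unfolding S_def .
  moreover have "\<forall>j\<in>{1..h}. (\<Sum>m\<in>S. beta e m ^ 2 ^ (j - 1) * c m) = 0"
  proof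
    fix j assume "j \<in> {1..h}"
    then have "(\<Sum>m\<in>coords - erased e. beta e m ^ 2 ^ (j - 1) * c m) = 0"
      using \<open>c \<in> code\<close> unfolding mem_code_iff[OF e] by blast
    moreover have "(\<Sum>m\<in>S. beta e m ^ 2 ^ (j - 1) * c m)
        = (\<Sum>m\<in>coords - erased e. beta e m ^ 2 ^ (j - 1) * c m)"
      using finite_coords by (intro sum.mono_neutral_left) (auto simp: S_def)
    ultimately show "(\<Sum>m\<in>S. beta e m ^ 2 ^ (j - 1) * c m) = 0"
      by simp
  qed
  ultimately have "\<forall>m\<in>S. c m = 0"
    by (rule moore_kernel_trivial[OF char_2])
  then show ?thesis
    unfolding S_def by blast
qed

lemma codeword_extension:
  assumes e: "\<forall>i<l. e i < r+1" and D: "D \<subseteq> coords - erased e" "card D = k"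
  shows "\<exists>c\<in>code. \<forall>m\<in>D. c m = v m"
proof -
  define R where "R = coords - erased e - D"
  define q where "q j = (2::nat) ^ (j - 1)" for j
  have "finite R" "finite D"
    unfolding R_def using finite_coords D(1) finite_subset by auto
  have "card R = h"
    unfolding R_def using card_coords_minus_erased[OF e] D finite_coords
    by (simp add: card_Diff_subset finite_subset)
  have "R \<subseteq> coords - erased e"
    unfolding R_def by blast
  then have "binary_indep (beta e) R"
    using binary_indep_beta[OF e] \<open>card R = h\<close> by simp
  then have "\<exists>y. \<forall>j\<in>{1..h}. (\<Sum>m\<in>R. beta e m ^ q j * y m) = - (\<Sum>m\<in>D. beta e m ^ q j * v m)"
    using moore_system_solvable[OF char_2 \<open>finite R\<close>] \<open>card R = h\<close> unfolding q_def by simp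
  then obtain y where y: "\<forall>j\<in>{1..h}. (\<Sum>m\<in>R. beta e m ^ q j * y m) = - (\<Sum>m\<in>D. beta e m ^ q j * v m)"
    by blast
  define z where "z m = (if m \<in> D then v m else y m)" for m
  have split: "(\<Sum>m\<in>coords - erased e. f m) = (\<Sum>m\<in>D. f m) + (\<Sum>m\<in>R. f m)" for f :: "_ \<Rightarrow> 'f"
  proof -
    have "coords - erased e = D \<union> R" "D \<inter> R = {}"
      unfolding R_def using D(1) by auto
    then show ?thesis
      using \<open>finite D\<close> \<open>finite R\<close> by (simp add: sum.union_disjoint)
  qed
  have "(\<Sum>m\<in>coords - erased e. beta e m ^ q j * z m) = 0" if "j \<in> {1..h}" for j
  proof -
    have "(\<Sum>m\<in>D. beta e m ^ q j * z m) = (\<Sum>m\<in>D. beta e m ^ q j * v m)"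
      by (rule sum.cong) (simp_all add: z_def)
    moreover have "(\<Sum>m\<in>R. beta e m ^ q j * z m) = (\<Sum>m\<in>R. beta e m ^ q j * y m)"
      by (rule sum.cong) (simp_all add: z_def R_def)
    ultimately show ?thesis
      unfolding split using y that by simp
  qed
  then have "fill e z \<in> code"
    unfolding q_def by (intro fill_mem_code[OF e]) blast
  moreover have "\<forall>m\<in>D. fill e z m = v m"
    using D(1) fill_eq by (auto simp: z_def)
  ultimately show ?thesis
    by blast
qed

lemma mds_puncture:
  assumes e: "\<forall>i<l. e i < r+1"
  shows "mds_code (puncture code (erased e)) (coords - erased e) (k + h) k"
proof -
  obtain D where D: "D \<subseteq> coords - erased e" "card D = k"
    using obtain_subset_with_card_n card_coords_minus_erased[OF e] by (metis le_add1)
  show ?thesis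
  proof (rule mds_codeI[OF lin_code_puncture[OF lin_code_code] card_coords_minus_erased[OF e] k_pos D])
    fix p assume p: "p \<in> puncture code (erased e)" "p \<noteq> (\<lambda>_. 0)"
    then obtain c where c: "c \<in> code" "p = (\<lambda>m. if m \<in> erased e then 0 else c m)"
      unfolding puncture_def by blast
    have "\<exists>m\<in>coords - erased e. c m \<noteq> 0"
      using p c mem_code_iff[OF e] by fastforce
    then have "\<not> card {m \<in> coords - erased e. c m \<noteq> 0} \<le> h"
      using sparse_codeword_vanishes[OF e c(1)] by blast
    then show "h < weight (coords - erased e) p"
      unfolding weight_def c(2) by (simp add: not_le cong: conj_cong)
  next
    fix v
    obtain c where "c \<in> code" "\<forall>m\<in>D. c m = v m"
      using codeword_extension[OF e D] by blast
    then show "\<exists>p\<in>puncture code (erased e). \<forall>j\<in>D. p j = v j"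
      using D unfolding puncture_def by force
  qed
qed

lemma inj_on_puncture:
  assumes e: "\<forall>i<l. e i < r+1"
  shows "inj_on (\<lambda>c m. if m \<in> erased e then 0 else c m) code"
proof (rule inj_onI)
  fix c c' assume c: "c \<in> code" and c': "c' \<in> code"
    and "(\<lambda>m. if m \<in> erased e then 0 else c m) = (\<lambda>m. if m \<in> erased e then 0 else c' m)"
  then have off: "c m = c' m" if "m \<notin> erased e" for m
    using that fun_cong[of _ _ m] by fastforce
  have on_erased: "c (i, e i) = c' (i, e i)" if "i < l" for i
  proof -
    have "(i, s) \<notin> erased e" if "s \<noteq> e i" for s
      using that unfolding erased_def by auto
    then show ?thesis
      using local_parity[OF c that] local_parity[OF c' that] e that off by (auto intro!: sum.cong)
  qed
  show "c = c'"
  proof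
    fix m
    show "c m = c' m"
    proof (cases "m \<in> erased e")
      case True
      then show ?thesis
        using on_erased unfolding erased_def by blast
    qed (rule off)
  qed
qed

lemma local_code_code: "local_code code coords (\<lambda>i. {i} \<times> {..<r+1}) l k r h"
proof -
  define e :: "nat \<Rightarrow> nat" where "e i = 0" for i
  have e: "\<forall>i<l. e i < r+1"
    by (simp add: e_def)
  have "\<exists>D. D \<subseteq> coords - erased e \<and> card D = k \<and> systematic (puncture code (erased e)) D"
    using mds_puncture[OF e] unfolding mds_code_def by (elim conjE)
  then obtain D where D: "D \<subseteq> coords - erased e" "card D = k"
    and sys: "systematic (puncture code (erased e)) D"
    by blast
  have "D \<inter> erased e = {}"
    using D(1) by blast
  then have "systematic code D"
    by (rule systematic_if_puncture_systematic[OF sys _ inj_on_puncture[OF e]])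
  moreover have "c (i, e i) = (\<Sum>m\<in>{i} \<times> {..<r+1} - {(i, e i)}. c m)" if "c \<in> code" "i < l" for c i
  proof -
    have "{i} \<times> {..<r+1} - {(i, e i)} = Pair i ` ({..<r+1} - {e i})"
      by auto
    then show ?thesis
      using local_parity[OF that] e that by (simp add: sum.reindex inj_on_def)
  qed
  moreover have "D \<subseteq> coords - (\<lambda>i. (i, e i)) ` {..<l}"
    using D(1) unfolding erased_def .
  moreover have "coords = (\<Union>i<l. {i} \<times> {..<r+1})"
    unfolding coords_def by auto
  moreover have "card coords = k + h + l"
    using lr_eq by (simp add: coords_def algebra_simps)
  moreover have "\<forall>i<l. (i, e i) \<in> {i} \<times> {..<r+1}"
    using e by simp
  ultimately show ?thesis
    unfolding local_code_def using lin_code_code D(2)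
    by (intro conjI exI[of _ "\<lambda>i. (i, e i)"] exI[of _ D]) (auto simp: card_cartesian_product)
qed

lemma erasure_pattern:
  assumes "E \<subseteq> coords" "\<forall>i<l. card (E \<inter> {i} \<times> {..<r+1}) = 1"
  obtains e where "\<forall>i<l. e i < r+1" "E = erased e"
proof -
  have ex: "\<exists>s. s < r+1 \<and> E \<inter> {i} \<times> {..<r+1} = {(i, s)}" if "i < l" for i
  proof -
    have "card (E \<inter> {i} \<times> {..<r+1}) = 1"
      using assms(2) that by blast
    then obtain m where m: "E \<inter> {i} \<times> {..<r+1} = {m}"
      by (rule card_1_singletonE)
    then obtain s where "m = (i, s)" "s < r+1"
      by blast
    then show ?thesis
      using m by blast
  qed
  define e where "e i = (SOME s. s < r+1 \<and> E \<inter> {i} \<times> {..<r+1} = {(i, s)})" for i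
  have e: "e i < r+1 \<and> E \<inter> {i} \<times> {..<r+1} = {(i, e i)}" if "i < l" for i
    unfolding e_def by (rule someI_ex[OF ex[OF that]])
  have "E = erased e"
  proof
    show "E \<subseteq> erased e"
    proof
      fix m assume "m \<in> E"
      then obtain i s where m: "m = (i, s)" "i < l" "s < r+1"
        using assms(1) unfolding coords_def by blast
      then have "(i, s) \<in> E \<inter> {i} \<times> {..<r+1}"
        using \<open>m \<in> E\<close> by simp
      then have "s = e i"
        using e[OF \<open>i < l\<close>] by (metis prod.inject singletonD)
      then show "m \<in> erased e"
        using m unfolding erased_def by simp
    qed
  next
    show "erased e \<subseteq> E"
    proof
      fix m assume "m \<in> erased e"
      then obtain i where "i < l" "m = (i, e i)"
        unfolding erased_def by blast
      then show "m \<in> E"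
        using e[OF \<open>i < l\<close>] by blast
    qed
  qed
  moreover have "\<forall>i<l. e i < r+1"
    using e by blast
  ultimately show thesis
    using that by blast
qed

lemma max_recoverable_code: "max_recoverable code coords (\<lambda>i. {i} \<times> {..<r+1}) l k r h"
  unfolding max_recoverable_def
proof (intro conjI allI impI local_code_code)
  fix E assume "E \<subseteq> coords \<and> (\<forall>i<l. card (E \<inter> {i} \<times> {..<r+1}) = 1)"
  then obtain e where "\<forall>i<l. e i < r+1" "E = erased e"
    using erasure_pattern by blast
  then show "mds_code (puncture code E) (coords - E) (k + h) k"
    using mds_puncture by simp
qed

end

theorem proposition14:
  fixes k r h l a b :: nat
    and K :: "'f::{field,finite} set"
    and xi lam :: "nat \<Rightarrow> 'f"
  assumes "k > 0" "r > 0" "h > 0"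
    and "l * r = k + h"
    and "a > 0" "b > 0"
    and "card (UNIV :: 'f set) = 2 ^ b"
    and "is_subfield K" "card K = 2 ^ a"
    and "\<forall>s<r+1. xi s \<in> K" "inj_on xi {..<r+1}"
    and "weakly_indep (xi ` {..<r+1}) (if even h then h else h + 1)"
    and "inj_on lam {..<l}"
    and "t_wise_indep_over K (lam ` {..<l}) h"
  shows "max_recoverable
     {x :: nat \<times> nat \<Rightarrow> 'f.
        (\<forall>p. p \<notin> {..<l} \<times> {..<r+1} \<longrightarrow> x p = 0) \<and>
        (\<forall>j\<in>{1..h}. (\<Sum>(i,s)\<in>{..<l} \<times> {..<r+1}. (lam i * xi s) ^ (2 ^ (j - 1)) * x (i, s)) = 0) \<and>
        (\<forall>i<l. (\<Sum>s<r+1. x (i, s)) = 0)}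
     ({..<l} \<times> {..<r+1}) (\<lambda>i. {i} \<times> {..<r+1}) l k r h"
proof -
  interpret frobenius_lrc k r h l K xi lam
    using CHAR_eq_2_if_card_eq_power_2[OF assms(7)] assms(1,4,8,10-14) by unfold_locales
  show ?thesis
    using max_recoverable_code unfolding code_def coords_def .
qed

end
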